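(* Let $G$ be a topological group such that $\mathfrak{L}(G)$ carries a structure of real vector space whose scalar multiplication and addition satisfy, for all $t,s\in\mathbb{R}$ and $X_1,X_2\in\mathfrak{L}(G)$, $$(tX_1)(s)=X_1(ts),\qquad (X_1+X_2)(t)=\lim_{n\to\infty}\Big(X_1\big(\tfrac{t}{n}\big)X_2\big(\tfrac{t}{n}\big)\Big)^n,$$ the latter convergence being uniform on every compact subset of $\mathbb{R}$. Then for every Hausdorff locally convex space $\mathcal{Y}$ and every $\phi\in\mathcal{LUC}^1_{\rm loc}(G,\mathcal{Y})$ the map $\mathfrak{L}(G)\to\mathcal{LUC}_{\rm loc}(G,\mathcal{Y})$, $X\mapsto D^\lambda_X\phi$, is linear.
   Context: All topological groups are Hausdorff. $\mathfrak{L}(G)$ is the set of continuous homomorphisms $(\mathbb{R},+)\to G$. For $\phi\colon G\to\mathcal{Y}$, $X\in\mathfrak{L}(G)$, $g\in G$: $(D^\lambda_X\phi)(g)=\lim_{t\to0}\frac{\phi(gX(t))-\phi(g)}{t}$ when it exists. $\mathcal{LUC}_{\rm loc}(G,\mathcal{Y})$ is the set of $\phi\colon G\to\mathcal{Y}$ such that every $g_0\in G$ has a neighborhood $V$ with: for every neighborhood $U$ of $0\in\mathcal{Y}$ there is a neighborhood $W$ of $\mathbf{1}\in G$ such that $x,y\in V$, $x^{-1}y\in W$ imply $\phi(x)-\phi(y)\in U$. $\mathcal{LUC}^1_{\rm loc}(G,\mathcal{Y})$ is the set of $\phi\in\mathcal{LUC}_{\rm loc}(G,\mathcal{Y})$ such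 that $D^\lambda_X\phi(g)$ exists for all $X,g$ and $D^\lambda_X\phi\in\mathcal{LUC}_{\rm loc}(G,\mathcal{Y})$ for every $X\in\mathfrak{L}(G)$. *)

theory Defs
  imports "HOL-Analysis.Analysis"
begin

text \<open>Topological groups are modelled by the type class
  topological_group_add + t2_space (additive notation, NOT assumed commutative):
  the group product g h is written g + h, the unit is 0, the inverse of g is - g.\<close>

class locally_convex_space = real_vector + t2_space +
  assumes lcs_add_cont: "LIM p (nhds a \<times>\<^sub>F nhds b). fst p + snd p :> nhds (a + b)"
  assumes lcs_scale_cont: "LIM p (nhds c \<times>\<^sub>F nhds x). fst p *\<^sub>R snd p :> nhds (c *\<^sub>R x)"
  assumes lcs_convex_nhds:
    "open U \<Longrightarrow> 0 \<in> U \<Longrightarrow> \<exists>V. open V \<and> 0 \<in> V \<and>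
      (\<forall>x\<in>V. \<forall>y\<in>V. \<forall>u v. 0 \<le> u \<and> 0 \<le> v \<and> u + v = 1 \<longrightarrow> u *\<^sub>R x + v *\<^sub>R y \<in> V) \<and> V \<subseteq> U"

definition nhd_of :: "'a::topological_space set \<Rightarrow> 'a \<Rightarrow> bool" where
  "nhd_of S x \<longleftrightarrow> (\<exists>T. open T \<and> x \<in> T \<and> T \<subseteq> S)"

definition one_param_subgroups :: "(real \<Rightarrow> 'g::topological_group_add) set" where
  "one_param_subgroups = {X. continuous_on UNIV X \<and> (\<forall>s t. X (s + t) = X s + X t)}"

definition gpow :: "'g::monoid_add \<Rightarrow> nat \<Rightarrow> 'g" where
  "gpow a n = (((+) a) ^^ n) 0"

definition unif_conv_on_compacts ::
    "(nat \<Rightarrow> real \<Rightarrow> 'g::topological_group_add) \<Rightarrow> (real \<Rightarrow> 'g) \<Rightarrow> bool" where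
  "unif_conv_on_compacts F f \<longleftrightarrow>
     (\<forall>K. compact K \<longrightarrow>
        (\<forall>W. nhd_of W (0::'g) \<longrightarrow>
           (\<forall>\<^sub>F n in sequentially. \<forall>t\<in>K. - f t + F n t \<in> W)))"

definition real_vector_space_on ::
    "'v set \<Rightarrow> ('v \<Rightarrow> 'v \<Rightarrow> 'v) \<Rightarrow> (real \<Rightarrow> 'v \<Rightarrow> 'v) \<Rightarrow> 'v \<Rightarrow> bool" where
  "real_vector_space_on L add scal z \<longleftrightarrow>
     z \<in> L \<and>
     (\<forall>x\<in>L. \<forall>y\<in>L. add x y \<in> L) \<and>
     (\<forall>c. \<forall>x\<in>L. scal c x \<in> L) \<and>
     (\<forall>x\<in>L. \<forall>y\<in>L. \<forall>w\<in>L. add (add x y) w = add x (add y w)) \<and>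
     (\<forall>x\<in>L. \<forall>y\<in>L. add x y = add y x) \<and>
     (\<forall>x\<in>L. add z x = x) \<and>
     (\<forall>x\<in>L. \<exists>y\<in>L. add x y = z) \<and>
     (\<forall>a b. \<forall>x\<in>L. scal a (scal b x) = scal (a * b) x) \<and>
     (\<forall>x\<in>L. scal 1 x = x) \<and>
     (\<forall>a. \<forall>x\<in>L. \<forall>y\<in>L. scal a (add x y) = add (scal a x) (scal a y)) \<and>
     (\<forall>a b. \<forall>x\<in>L. scal (a + b) x = add (scal a x) (scal b x))"

definition has_left_deriv ::
    "('g::topological_group_add \<Rightarrow> 'y::locally_convex_space) \<Rightarrow> (real \<Rightarrow> 'g) \<Rightarrow> 'g \<Rightarrow> 'y \<Rightarrow> bool" where
  "has_left_deriv \<phi> X g d \<longleftrightarrow>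
     ((\<lambda>t. (1 / t) *\<^sub>R (\<phi> (g + X t) - \<phi> g)) \<longlongrightarrow> d) (at 0)"

definition left_deriv ::
    "(real \<Rightarrow> 'g::topological_group_add) \<Rightarrow> ('g \<Rightarrow> 'y::locally_convex_space) \<Rightarrow> 'g \<Rightarrow> 'y" where
  "left_deriv X \<phi> g = Lim (at 0) (\<lambda>t. (1 / t) *\<^sub>R (\<phi> (g + X t) - \<phi> g))"

definition LUC_loc :: "('g::topological_group_add \<Rightarrow> 'y::locally_convex_space) set" where
  "LUC_loc = {\<phi>. \<forall>g0. \<exists>V. nhd_of V g0 \<and>
       (\<forall>U. nhd_of U (0::'y) \<longrightarrow>
          (\<exists>W. nhd_of W (0::'g) \<and>
             (\<forall>x\<in>V. \<forall>y\<in>V. - x + y \<in> W \<longrightarrow> \<phi> x - \<phi> y \<in> U)))}"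

definition LUC1_loc :: "('g::topological_group_add \<Rightarrow> 'y::locally_convex_space) set" where
  "LUC1_loc = {\<phi>. \<phi> \<in> LUC_loc \<and>
       (\<forall>X\<in>one_param_subgroups. \<forall>g. \<exists>d. has_left_deriv \<phi> X g d) \<and>
       (\<forall>X\<in>one_param_subgroups. left_deriv X \<phi> \<in> LUC_loc)}"

end

theory Submission
  imports Defs
begin

text \<open>Homogeneity is a change of variables in the difference quotient. For additivity put
  X = X1 + X2 and Y_n(t) = (X1(t/n) X2(t/n))^n. The increment \<phi>(g Y_n(t)) - \<phi>(g) telescopes
  into 2n increments along X1 and X2 of length t/n; their base points stay, uniformly in n,
  in a neighbourhood of g on which the derivatives along X1 and X2 are close to their values
  at g, so a mean value inequality bounds each increment. Letting n \<rightarrow> \<infinity> gives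
  p(\<phi>(g X(t)) - \<phi>(g) - t (D1 + D2)) \<le> \<epsilon> |t| for every continuous seminorm p, and the
  Minkowski functionals of convex neighbourhoods of 0 show that these seminorms determine the
  topology of a locally convex space.\<close>

section \<open>Continuous seminorms on locally convex spaces\<close>

lemma tendsto_scaleR_lcs:
  fixes f :: "_ \<Rightarrow> 'y::locally_convex_space"
  assumes "(c \<longlongrightarrow> c0) F" "(f \<longlongrightarrow> a) F"
  shows "((\<lambda>x. c x *\<^sub>R f x) \<longlongrightarrow> c0 *\<^sub>R a) F"
proof -
  have "filterlim (\<lambda>x. (c x, f x)) (nhds c0 \<times>\<^sub>F nhds a) F"
    using tendsto_Pair[OF assms] by (simp add: nhds_prod)
  from filterlim_compose[OF lcs_scale_cont this] show ?thesis by simp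
qed

lemma tendsto_uminus_lcs: "(uminus \<longlongrightarrow> - a) (nhds (a::'y::locally_convex_space))"
  using tendsto_scaleR_lcs[OF tendsto_const filterlim_ident, of "-1" a] by simp

instance locally_convex_space \<subseteq> topological_ab_group_add
  by standard (auto intro: lcs_add_cont tendsto_uminus_lcs)

definition continuous_seminorm :: "('a::locally_convex_space \<Rightarrow> real) \<Rightarrow> bool" where
  "continuous_seminorm p \<longleftrightarrow>
     (\<forall>x y. p (x + y) \<le> p x + p y) \<and> (\<forall>c x. p (c *\<^sub>R x) = \<bar>c\<bar> * p x) \<and> continuous_on UNIV p"

lemma continuous_seminorm_triangle: "continuous_seminorm p \<Longrightarrow> p (x + y) \<le> p x + p y"
  by (simp add: continuous_seminorm_def)

lemma continuous_seminorm_scaleR: "continuous_seminorm p \<Longrightarrow> p (c *\<^sub>R x) = \<bar>c\<bar> * p x"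
  by (simp add: continuous_seminorm_def)

lemma continuous_seminorm_zero: "continuous_seminorm p \<Longrightarrow> p 0 = 0"
  using continuous_seminorm_scaleR[of p 0 0] by simp

lemma continuous_seminorm_minus_commute:
  "continuous_seminorm p \<Longrightarrow> p (x - y) = p (y - x)"
  using continuous_seminorm_scaleR[of p "-1" "x - y"] by simp

lemma tendsto_continuous_seminorm:
  "continuous_seminorm p \<Longrightarrow> (f \<longlongrightarrow> a) F \<Longrightarrow> ((\<lambda>x. p (f x)) \<longlongrightarrow> p a) F"
  unfolding continuous_seminorm_def
  by (metis continuous_on_eq_continuous_at isCont_tendsto_compose open_UNIV UNIV_I)

lemma eventually_continuous_seminorm_less:
  fixes D :: "'a::t2_space \<Rightarrow> 'y::locally_convex_space"
  assumes p: "continuous_seminorm p" and "isCont D g" "e > 0"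
  shows "\<forall>\<^sub>F y in nhds g. p (D y - D g) < e"
proof (rule order_tendstoD)
  show "((\<lambda>y. p (D y - D g)) \<longlongrightarrow> p (D g - D g)) (nhds g)"
    using assms(2) by (intro tendsto_continuous_seminorm[OF p] tendsto_intros)
      (simp add: isCont_def tendsto_at_iff_tendsto_nhds)
qed (simp add: continuous_seminorm_zero[OF p] \<open>e > 0\<close>)

definition minkowski_functional :: "'a::real_vector set \<Rightarrow> 'a \<Rightarrow> real" where
  "minkowski_functional B x = Inf {t. 0 < t \<and> inverse t *\<^sub>R x \<in> B}"

context
  fixes B :: "'a::real_vector set"
  assumes convex: "convex B" and zero: "0 \<in> B"
    and symmetric: "\<forall>x\<in>B. - x \<in> B" and absorbing: "\<forall>x. \<exists>r>0. r *\<^sub>R x \<in> B"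
begin

private abbreviation "S x \<equiv> {t. 0 < t \<and> inverse t *\<^sub>R x \<in> B}"

private lemma balanced: "x \<in> B \<Longrightarrow> \<bar>c\<bar> \<le> 1 \<Longrightarrow> c *\<^sub>R x \<in> B"
  using convexD[OF convex, of x 0 c "1 - c"] convexD[OF convex, of "- x" 0 "- c" "1 + c"]
    zero symmetric
  by (cases "c \<ge> 0") auto

private lemma S_nonempty: "S x \<noteq> {}"
proof -
  obtain r where "r > 0" "r *\<^sub>R x \<in> B" using absorbing by blast
  then have "inverse r \<in> S x" by simp
  then show ?thesis by blast
qed

private lemma minkowski_functional_le: "t \<in> S x \<Longrightarrow> minkowski_functional B x \<le> t"
  unfolding minkowski_functional_def by (rule cInf_lower) (auto intro: bdd_belowI[of _ 0])

private lemma minkowski_functional_ge: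
  "(\<And>t. t \<in> S x \<Longrightarrow> m \<le> t) \<Longrightarrow> m \<le> minkowski_functional B x"
  unfolding minkowski_functional_def by (rule cInf_greatest[OF S_nonempty])

lemma minkowski_functional_less_one: "minkowski_functional B x < 1 \<Longrightarrow> x \<in> B"
proof -
  assume "minkowski_functional B x < 1"
  then obtain t where t: "t \<in> S x" "t < 1"
    using cInf_lessD[OF S_nonempty] unfolding minkowski_functional_def by blast
  then have "t *\<^sub>R (inverse t *\<^sub>R x) \<in> B" using balanced[of "inverse t *\<^sub>R x" t] by simp
  then show "x \<in> B" using t by simp
qed

lemma minkowski_functional_le_one: "x \<in> B \<Longrightarrow> minkowski_functional B x \<le> 1"
  by (rule minkowski_functional_le) simp

lemma minkowski_functional_add:
  "minkowski_functional B (x + y) \<le> minkowski_functional B x + minkowski_functional B y"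
proof -
  have "minkowski_functional B (x + y) \<le> t + u" if t: "t \<in> S x" and u: "u \<in> S y" for t u
  proof (rule minkowski_functional_le)
    have "(t/(t+u)) *\<^sub>R (inverse t *\<^sub>R x) + (u/(t+u)) *\<^sub>R (inverse u *\<^sub>R y) \<in> B"
      using t u by (intro convexD[OF convex]) (auto simp: add_divide_distrib[symmetric])
    moreover have "(t/(t+u)) *\<^sub>R (inverse t *\<^sub>R x) + (u/(t+u)) *\<^sub>R (inverse u *\<^sub>R y)
        = inverse (t+u) *\<^sub>R (x + y)"
    proof -
      have "t * inverse (t+u) * inverse t = inverse (t+u)" "u * inverse (t+u) * inverse u = inverse (t+u)"
        using t u by (simp_all add: field_simps)
      then show ?thesis by (simp only: scaleR_add_right scaleR_scaleR divide_inverse)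
    qed
    ultimately show "t + u \<in> S (x + y)" using t u by simp
  qed
  then have "minkowski_functional B (x + y) - u \<le> minkowski_functional B x" if "u \<in> S y" for u
    using that by (intro minkowski_functional_ge) (simp add: diff_le_eq)
  then have "minkowski_functional B (x + y) - minkowski_functional B x \<le> minkowski_functional B y"
    by (intro minkowski_functional_ge) (simp add: le_diff_eq add.commute diff_le_eq)
  then show ?thesis by simp
qed

private lemma minkowski_functional_scaleR_le:
  "minkowski_functional B (c *\<^sub>R x) \<le> \<bar>c\<bar> * minkowski_functional B x"
proof (cases "c = 0")
  case True
  have "minkowski_functional B 0 \<le> e" if "e > 0" for e
    using that zero by (intro minkowski_functional_le) simp
  then have "minkowski_functional B 0 \<le> 0" by (meson dense not_le)
  then show ?thesis using True by simp
next
  case False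
  have "\<bar>c\<bar> * t \<in> S (c *\<^sub>R x)" if t: "t \<in> S x" for t
  proof -
    have "inverse (\<bar>c\<bar> * t) *\<^sub>R (c *\<^sub>R x) = sgn c *\<^sub>R (inverse t *\<^sub>R x)"
      using False t by (auto simp: sgn_if)
    also have "\<dots> \<in> B" using t balanced[of "inverse t *\<^sub>R x" "sgn c"] by (simp add: abs_sgn_eq)
    finally show ?thesis using t False by simp
  qed
  then have "minkowski_functional B (c *\<^sub>R x) / \<bar>c\<bar> \<le> t" if "t \<in> S x" for t
    using that False minkowski_functional_le by (simp add: divide_le_eq mult.commute)
  then have "minkowski_functional B (c *\<^sub>R x) / \<bar>c\<bar> \<le> minkowski_functional B x"
    by (rule minkowski_functional_ge)
  then show ?thesis using False by (simp add: divide_le_eq mult.commute)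
qed

lemma minkowski_functional_scaleR:
  "minkowski_functional B (c *\<^sub>R x) = \<bar>c\<bar> * minkowski_functional B x"
proof (cases "c = 0")
  case True
  then show ?thesis
    using minkowski_functional_scaleR_le[of 0 x] minkowski_functional_ge[of 0 0] by fastforce
next
  case False
  have "minkowski_functional B x \<le> \<bar>inverse c\<bar> * minkowski_functional B (c *\<^sub>R x)"
    using minkowski_functional_scaleR_le[of "inverse c" "c *\<^sub>R x"] False by simp
  then have "\<bar>c\<bar> * minkowski_functional B x \<le> minkowski_functional B (c *\<^sub>R x)"
    using False by (simp add: field_simps abs_inverse)
  then show ?thesis using minkowski_functional_scaleR_le[of c x] by simp
qed

end

lemma open_nhd_zero_absorbing:
  fixes B :: "'a::locally_convex_space set"
  assumes "open B" "0 \<in> B"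
  shows "\<exists>r>0. r *\<^sub>R x \<in> B"
proof -
  have "((\<lambda>r. r *\<^sub>R x) \<longlongrightarrow> 0 *\<^sub>R x) (nhds 0)"
    by (rule tendsto_scaleR_lcs[OF filterlim_ident tendsto_const])
  then have "\<forall>\<^sub>F r in nhds 0. r *\<^sub>R x \<in> B"
    using assms by (simp add: topological_tendstoD)
  then obtain e where "e > 0" "\<And>r. \<bar>r\<bar> < e \<Longrightarrow> r *\<^sub>R x \<in> B"
    unfolding eventually_nhds_metric dist_real_def by auto
  then show ?thesis by (intro exI[of _ "e/2"]) auto
qed

lemma continuous_seminorm_minkowski_functional:
  fixes B :: "'a::locally_convex_space set"
  assumes "open B" "convex B" "0 \<in> B" "\<forall>x\<in>B. - x \<in> B"
  shows "continuous_seminorm (minkowski_functional B)"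
proof -
  have absorbing: "\<forall>x. \<exists>r>0. r *\<^sub>R x \<in> B"
    using open_nhd_zero_absorbing[OF assms(1,3)] by blast
  note mf = minkowski_functional_add[OF assms(2-4) absorbing]
    minkowski_functional_scaleR[OF assms(2-4) absorbing]
    minkowski_functional_le_one[OF assms(2-4) absorbing]
  have "(\<lambda>x. minkowski_functional B x) \<midarrow>a\<rightarrow> minkowski_functional B a" for a
  proof (rule tendstoI)
    fix e :: real assume e: "e > 0"
    have "((\<lambda>x. (2 / e) *\<^sub>R (x - a)) \<longlongrightarrow> (2/e) *\<^sub>R (a - a)) (at a)"
      by (intro tendsto_scaleR_lcs tendsto_intros)
    then have "\<forall>\<^sub>F x in at a. (2 / e) *\<^sub>R (x - a) \<in> B"
      using assms(1,3) by (auto dest: topological_tendstoD)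
    then show "\<forall>\<^sub>F x in at a. dist (minkowski_functional B x) (minkowski_functional B a) < e"
    proof eventually_elim
      case (elim x)
      have "minkowski_functional B x \<le> minkowski_functional B (x - a) + minkowski_functional B a"
        "minkowski_functional B a \<le> minkowski_functional B (x - a) + minkowski_functional B x"
        using mf(1)[of "x - a" a] mf(1)[of "a - x" x] mf(2)[of "-1" "x - a"] by simp_all
      moreover have "minkowski_functional B ((2/e) *\<^sub>R (x - a)) \<le> 1"
        using elim by (rule mf(3))
      then have "minkowski_functional B (x - a) \<le> e / 2"
        using e by (simp only: mf(2)) (simp add: field_simps)
      ultimately show ?case using e by (simp add: dist_real_def abs_less_iff)
    qed
  qed
  then show ?thesis
    unfolding continuous_seminorm_def by (simp add: mf continuous_on_def tendsto_at_iff_tendsto_nhds_within)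
qed

lemma open_contains_unit_ball_of_continuous_seminorm:
  fixes U :: "'a::locally_convex_space set"
  assumes "open U" "0 \<in> U"
  obtains p where "continuous_seminorm p" "\<And>x. p x < 1 \<Longrightarrow> x \<in> U"
proof -
  obtain V where V: "open V" "0 \<in> V" "V \<subseteq> U" "convex V"
    using lcs_convex_nhds[OF assms] unfolding convex_def by blast
  define B where "B = V \<inter> uminus -` V"
  have B: "open B" "convex B" "0 \<in> B" "\<forall>x\<in>B. - x \<in> B"
    using V by (auto simp: B_def intro!: open_Int open_vimage convex_Int convex_linear_vimage
        continuous_intros linear_uminus)
  have "x \<in> U" if "minkowski_functional B x < 1" for x
    using minkowski_functional_less_one[OF B(2-4) allI[OF open_nhd_zero_absorbing[OF B(1,3)]] that] V(3)
    by (auto simp: B_def)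
  then show ?thesis by (rule that[OF continuous_seminorm_minkowski_functional[OF B]])
qed

lemma tendsto_by_continuous_seminorms:
  fixes f :: "_ \<Rightarrow> 'a::locally_convex_space"
  assumes "\<And>p e. continuous_seminorm p \<Longrightarrow> e > 0 \<Longrightarrow> \<forall>\<^sub>F x in F. p (f x - a) \<le> e"
  shows "(f \<longlongrightarrow> a) F"
proof (rule topological_tendstoI)
  fix S assume "open S" "a \<in> S"
  then have "open ((\<lambda>y. y + a) -` S)" "0 \<in> (\<lambda>y. y + a) -` S"
    by (auto intro!: open_vimage continuous_intros)
  then obtain p where p: "continuous_seminorm p" "\<And>x. p x < 1 \<Longrightarrow> x + a \<in> S"
    by (rule open_contains_unit_ball_of_continuous_seminorm) auto
  have "\<forall>\<^sub>F x in F. p (f x - a) \<le> 1/2" by (rule assms[OF p(1)]) simp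
  then show "\<forall>\<^sub>F x in F. f x \<in> S"
  proof eventually_elim
    case (elim x)
    then show ?case using p(2)[of "f x - a"] by simp
  qed
qed

section \<open>A mean value inequality\<close>

lemma continuous_le_linear_of_right_steps:
  fixes q :: "real \<Rightarrow> real"
  assumes "0 \<le> s" "continuous_on {0..s} q" "q 0 \<le> 0"
    and step: "\<And>\<tau> e. 0 \<le> \<tau> \<Longrightarrow> \<tau> < s \<Longrightarrow> e > 0 \<Longrightarrow> \<exists>h. 0 < h \<and> h < e \<and> q (\<tau> + h) \<le> q \<tau> + M * h"
  shows "q s \<le> M * s"
proof -
  define A where "A = {\<tau> \<in> {0..s}. q \<tau> \<le> M * \<tau>}"
  have "closed A" unfolding A_def
    by (intro continuous_on_closed_Collect_le assms continuous_intros)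
  moreover have "0 \<in> A" "bdd_above A" using assms by (auto simp: A_def bdd_above_def)
  ultimately have sup_A: "Sup A \<in> A" by (intro closed_contains_Sup) auto
  have "Sup A = s"
  proof (rule ccontr)
    assume "Sup A \<noteq> s"
    with sup_A have "0 \<le> Sup A" "Sup A < s" "q (Sup A) \<le> M * Sup A" by (auto simp: A_def)
    then obtain h where "0 < h" "h < s - Sup A" "q (Sup A + h) \<le> q (Sup A) + M * h"
      using step[of "Sup A" "s - Sup A"] by auto
    then have "Sup A + h \<in> A" using \<open>0 \<le> Sup A\<close> \<open>q (Sup A) \<le> M * Sup A\<close> by (auto simp: A_def algebra_simps)
    with \<open>bdd_above A\<close> \<open>0 < h\<close> show False by (meson cSup_upper less_add_same_cancel1 not_le)
  qed
  then show ?thesis using sup_A by (simp add: A_def)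
qed

lemma difference_quotient_limit_imp_continuous:
  fixes f :: "real \<Rightarrow> 'a::locally_convex_space"
  assumes "((\<lambda>r. (1/r) *\<^sub>R (f (\<tau> + r) - f \<tau>)) \<longlongrightarrow> d) (at 0)"
  shows "isCont f \<tau>"
proof -
  have "((\<lambda>r. r *\<^sub>R ((1/r) *\<^sub>R (f (\<tau> + r) - f \<tau>))) \<longlongrightarrow> 0 *\<^sub>R d) (at 0)"
    using assms by (intro tendsto_scaleR_lcs tendsto_intros)
  moreover have "\<forall>\<^sub>F r in at 0. r *\<^sub>R ((1/r) *\<^sub>R (f (\<tau> + r) - f \<tau>)) = f (\<tau> + r) - f \<tau>"
    by (auto simp: eventually_at_filter)
  ultimately have "((\<lambda>r. f (\<tau> + r) - f \<tau> + f \<tau>) \<longlongrightarrow> 0 + f \<tau>) (at 0)"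
    by (intro tendsto_add tendsto_const) (simp add: tendsto_cong)
  then have "(\<lambda>r. f (\<tau> + r)) \<midarrow>0\<rightarrow> f \<tau>" by simp
  then show ?thesis unfolding isCont_def by (rule LIM_offset_zero_cancel)
qed

lemma continuous_seminorm_increment_le_ivl:
  fixes f f' :: "real \<Rightarrow> 'a::locally_convex_space"
  assumes p: "continuous_seminorm p" and "0 \<le> s"
    and deriv: "\<And>\<tau>. \<tau> \<in> {0..s} \<Longrightarrow> ((\<lambda>r. (1/r) *\<^sub>R (f (\<tau> + r) - f \<tau>)) \<longlongrightarrow> f' \<tau>) (at 0)"
    and bound: "\<And>\<tau>. \<tau> \<in> {0..s} \<Longrightarrow> p (f' \<tau> - c) < M"
  shows "p (f s - f 0 - s *\<^sub>R c) \<le> M * s"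
proof (rule continuous_le_linear_of_right_steps[of s "\<lambda>\<tau>. p (f \<tau> - f 0 - \<tau> *\<^sub>R c)", simplified])
  show "0 \<le> s" by fact
  show "p 0 \<le> 0" using continuous_seminorm_zero[OF p] by simp
  have "continuous_on {0..s} f"
    using deriv difference_quotient_limit_imp_continuous by (blast intro: continuous_at_imp_continuous_on)
  then show "continuous_on {0..s} (\<lambda>\<tau>. p (f \<tau> - f 0 - \<tau> *\<^sub>R c))"
    unfolding continuous_on_def
    by (intro ballI tendsto_continuous_seminorm[OF p] tendsto_intros tendsto_scaleR_lcs) auto
next
  fix \<tau> e :: real assume \<tau>: "0 \<le> \<tau>" "\<tau> < s" and "0 < e"
  have "((\<lambda>r. p ((1/r) *\<^sub>R (f (\<tau> + r) - f \<tau>) - c)) \<longlongrightarrow> p (f' \<tau> - c)) (at_right 0)"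
    using deriv[of \<tau>] \<tau>
    by (intro tendsto_continuous_seminorm[OF p] tendsto_intros) (auto intro: tendsto_mono at_le)
  then have "\<forall>\<^sub>F r in at_right 0. p ((1/r) *\<^sub>R (f (\<tau> + r) - f \<tau>) - c) < M \<and> 0 < r \<and> r < e"
    using bound[of \<tau>] \<tau> \<open>0 < e\<close>
    by (intro eventually_conj order_tendstoD eventually_at_right_less)
      (auto simp: eventually_at_right_field intro!: exI[of _ e])
  then obtain h where h: "0 < h" "h < e" "p ((1/h) *\<^sub>R (f (\<tau> + h) - f \<tau>) - c) < M"
    using eventually_happens trivial_limit_at_right_real by blast
  define Q where "Q = (1/h) *\<^sub>R (f (\<tau> + h) - f \<tau>) - c"
  have "p (f (\<tau> + h) - f 0 - (\<tau> + h) *\<^sub>R c) = p ((f \<tau> - f 0 - \<tau> *\<^sub>R c) + h *\<^sub>R Q)"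
    using h by (simp add: Q_def algebra_simps)
  also have "\<dots> \<le> p (f \<tau> - f 0 - \<tau> *\<^sub>R c) + h * p Q"
    using continuous_seminorm_triangle[OF p, of _ "h *\<^sub>R Q"] h
    by (simp add: continuous_seminorm_scaleR[OF p])
  also have "\<dots> \<le> p (f \<tau> - f 0 - \<tau> *\<^sub>R c) + M * h"
    using h by (simp add: Q_def mult.commute)
  finally show "\<exists>h. 0 < h \<and> h < e \<and> p (f (\<tau> + h) - f 0 - (\<tau> + h) *\<^sub>R c) \<le> p (f \<tau> - f 0 - \<tau> *\<^sub>R c) + M * h"
    using h(1,2) by (intro exI[of _ h]) simp
qed

lemma continuous_seminorm_increment_le:
  fixes f f' :: "real \<Rightarrow> 'a::locally_convex_space"
  assumes p: "continuous_seminorm p"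
    and deriv: "\<And>\<tau>. \<tau> \<in> closed_segment 0 s \<Longrightarrow> ((\<lambda>r. (1/r) *\<^sub>R (f (\<tau> + r) - f \<tau>)) \<longlongrightarrow> f' \<tau>) (at 0)"
    and bound: "\<And>\<tau>. \<tau> \<in> closed_segment 0 s \<Longrightarrow> p (f' \<tau> - c) < M"
  shows "p (f s - f 0 - s *\<^sub>R c) \<le> M * \<bar>s\<bar>"
proof (cases "0 \<le> s")
  case True
  then have "{0..s} = closed_segment 0 s" by (simp add: closed_segment_eq_real_ivl)
  then have "p (f s - f 0 - s *\<^sub>R c) \<le> M * s"
    using deriv bound by (intro continuous_seminorm_increment_le_ivl[OF p True]) auto
  with True show ?thesis by simp
next
  case False
  have seg: "\<tau> \<in> {0..-s} \<Longrightarrow> - \<tau> \<in> closed_segment 0 s" for \<tau>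
    using False by (auto simp: closed_segment_eq_real_ivl)
  have "filterlim uminus (at 0) (at (0::real))"
    by (simp add: filterlim_def filtermap_at_minus)
  then have quot_reflected: "((\<lambda>r. (1/(- r)) *\<^sub>R (f (- \<tau> + - r) - f (- \<tau>))) \<longlongrightarrow> f' (- \<tau>)) (at 0)"
    if "\<tau> \<in> {0..-s}" for \<tau>
    using deriv[OF seg[OF that]] by (rule filterlim_compose[rotated])
  then have "((\<lambda>r. (1/r) *\<^sub>R (f (- (\<tau> + r)) - f (- \<tau>))) \<longlongrightarrow> - f' (- \<tau>)) (at 0)"
    if "\<tau> \<in> {0..-s}" for \<tau>
    using tendsto_minus[OF quot_reflected[OF that]] by simp
  moreover have "p (- f' (- \<tau>) - - c) < M" if "\<tau> \<in> {0..-s}" for \<tau>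
    using bound[OF seg[OF that]] continuous_seminorm_minus_commute[OF p, of c "f' (- \<tau>)"] by simp
  ultimately have "p (f (- (- s)) - f (- 0) - (- s) *\<^sub>R (- c)) \<le> M * (- s)"
    using False by (intro continuous_seminorm_increment_le_ivl[OF p, where f' = "\<lambda>\<tau>. - f' (- \<tau>)"]) auto
  then show ?thesis using False by simp
qed

section \<open>One-parameter subgroups and left derivatives\<close>

lemma one_param_subgroup_add: "X \<in> one_param_subgroups \<Longrightarrow> X (s + t) = X s + X t"
  by (simp add: one_param_subgroups_def)

lemma one_param_subgroup_zero: "X \<in> one_param_subgroups \<Longrightarrow> X 0 = 0"
  using one_param_subgroup_add[of X 0 0] by (metis add.right_neutral add_left_cancel)

lemma one_param_subgroup_isCont: "X \<in> one_param_subgroups \<Longrightarrow> isCont X t"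
  by (simp add: one_param_subgroups_def continuous_on_eq_continuous_at)

lemma gpow_0 [simp]: "gpow a 0 = 0"
  by (simp add: gpow_def)

lemma gpow_Suc: "gpow a (Suc n) = a + gpow a n"
  by (simp add: gpow_def)

lemma gpow_Suc_right: "gpow a (Suc n) = gpow a n + (a::'a::monoid_add)"
proof (induction n)
  case (Suc n)
  then show ?case by (metis gpow_Suc add.assoc)
qed (simp add: gpow_Suc)

lemma gpow_zero [simp]: "gpow (0::'a::monoid_add) n = 0"
  by (induction n) (simp_all add: gpow_Suc)

lemma tendsto_gpow:
  fixes f :: "_ \<Rightarrow> 'a::topological_monoid_add"
  shows "(f \<longlongrightarrow> a) F \<Longrightarrow> ((\<lambda>x. gpow (f x) n) \<longlongrightarrow> gpow a n) F"
  by (induction n) (simp_all add: gpow_Suc tendsto_add)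

lemma unif_conv_on_compacts_imp_tendsto:
  fixes F :: "nat \<Rightarrow> real \<Rightarrow> 'g::topological_group_add"
  assumes "unif_conv_on_compacts F f"
  shows "((\<lambda>n. F n t) \<longlongrightarrow> f t) sequentially"
proof -
  have "((\<lambda>n. - f t + F n t) \<longlongrightarrow> 0) sequentially"
  proof (rule topological_tendstoI)
    fix W :: "'g set" assume "open W" "0 \<in> W"
    then have "nhd_of W 0" by (auto simp: nhd_of_def)
    from assms[unfolded unif_conv_on_compacts_def, rule_format, OF compact_sing this]
    show "\<forall>\<^sub>F n in sequentially. - f t + F n t \<in> W" by simp
  qed
  from tendsto_add[OF tendsto_const this, of "f t"] show ?thesis
    by (simp add: add.assoc[symmetric])
qed

lemma open_contains_translate_sum2:
  fixes T :: "'a::topological_monoid_add set"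
  assumes "open T" "x \<in> T"
  obtains W where "open W" "0 \<in> W" "\<And>a b. a \<in> W \<Longrightarrow> b \<in> W \<Longrightarrow> x + a + b \<in> T"
proof -
  have id: "((\<lambda>q. q) \<longlongrightarrow> (0, 0)) (nhds (0::'a, 0::'a))"
    by (rule filterlim_ident)
  have "((\<lambda>q. x + fst q + snd q) \<longlongrightarrow> x + fst (0::'a, 0::'a) + snd (0::'a, 0::'a)) (nhds (0, 0))"
    by (rule tendsto_add[OF tendsto_add[OF tendsto_const tendsto_fst[OF id]] tendsto_snd[OF id]])
  then have "\<forall>\<^sub>F q in nhds 0 \<times>\<^sub>F nhds 0. x + fst q + snd q \<in> T"
    using assms by (simp add: nhds_prod[symmetric] topological_tendstoD)
  then obtain Q where Q: "eventually Q (nhds 0)" "\<And>a b. Q a \<Longrightarrow> Q b \<Longrightarrow> x + a + b \<in> T"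
    unfolding eventually_prod_same by auto
  then obtain W where "open W" "0 \<in> W" "\<forall>y\<in>W. Q y"
    unfolding eventually_nhds by blast
  with Q(2) show ?thesis by (intro that) auto
qed

lemma open_contains_translate_sum3:
  fixes T :: "'a::topological_monoid_add set"
  assumes "open T" "x \<in> T"
  obtains W where "open W" "0 \<in> W"
    "\<And>a b c. a \<in> W \<Longrightarrow> b \<in> W \<Longrightarrow> c \<in> W \<Longrightarrow> x + a + b + c \<in> T"
proof -
  obtain W1 where W1: "open W1" "0 \<in> W1" "\<And>a b. a \<in> W1 \<Longrightarrow> b \<in> W1 \<Longrightarrow> x + a + b \<in> T"
    using open_contains_translate_sum2[OF assms] by blast
  obtain W2 where W2: "open W2" "0 \<in> W2" "\<And>a b. a \<in> W2 \<Longrightarrow> b \<in> W2 \<Longrightarrow> 0 + a + b \<in> W1"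
    using open_contains_translate_sum2[OF W1(1,2)] by blast
  show ?thesis
  proof (rule that[of "W1 \<inter> W2"])
    fix a b c assume "a \<in> W1 \<inter> W2" "b \<in> W1 \<inter> W2" "c \<in> W1 \<inter> W2"
    then show "x + a + b + c \<in> T" using W1(3)[of a "b + c"] W2(3)[of b c] by (simp add: add.assoc)
  qed (use W1 W2 in auto)
qed

lemma LUC_loc_isCont:
  fixes \<phi> :: "'g::{topological_group_add,t2_space} \<Rightarrow> 'y::locally_convex_space"
  assumes "\<phi> \<in> LUC_loc"
  shows "isCont \<phi> x"
proof -
  obtain V where V: "nhd_of V x" and H: "\<And>U. nhd_of U 0 \<Longrightarrow> \<exists>W. nhd_of W 0 \<and>
      (\<forall>a\<in>V. \<forall>b\<in>V. - a + b \<in> W \<longrightarrow> \<phi> a - \<phi> b \<in> U)"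
    using assms unfolding LUC_loc_def by blast
  show ?thesis unfolding isCont_def
  proof (rule topological_tendstoI)
    fix S assume S: "open S" "\<phi> x \<in> S"
    have "open ((\<lambda>y. y + \<phi> x) -` S)"
      using S by (intro open_vimage) (auto intro: continuous_intros)
    then have U: "nhd_of ((\<lambda>y. y + \<phi> x) -` S) 0"
      using S by (auto simp: nhd_of_def)
    obtain W where W: "nhd_of W 0"
      and HW: "\<forall>a\<in>V. \<forall>b\<in>V. - a + b \<in> W \<longrightarrow> \<phi> a - \<phi> b \<in> (\<lambda>y. y + \<phi> x) -` S"
      using H[OF U] by blast
    have "((\<lambda>y. - y + x) \<longlongrightarrow> - x + x) (nhds x)"
      by (intro tendsto_intros filterlim_ident)
    then have ev_W: "\<forall>\<^sub>F y in nhds x. - y + x \<in> W"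
      using W unfolding nhd_of_def by (auto elim!: eventually_mono dest: topological_tendstoD)
    obtain TV where TV: "open TV" "x \<in> TV" "TV \<subseteq> V"
      using V unfolding nhd_of_def by blast
    have "\<forall>\<^sub>F y in nhds x. y \<in> TV"
      using TV(1,2) by (rule eventually_nhds_in_open)
    with ev_W have "\<forall>\<^sub>F y in nhds x. \<phi> y \<in> S"
    proof eventually_elim
      case (elim y)
      then have "\<phi> y - \<phi> x \<in> (\<lambda>z. z + \<phi> x) -` S" using HW TV by blast
      then show ?case by simp
    qed
    then show "\<forall>\<^sub>F y in at x. \<phi> y \<in> S" by (simp add: eventually_at_filter eventually_mono)
  qed
qed

lemma has_left_deriv_imp_left_deriv_eq:
  "has_left_deriv \<phi> X g d \<Longrightarrow> left_deriv X \<phi> g = d"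
  unfolding has_left_deriv_def left_deriv_def by (rule tendsto_Lim) simp_all

lemma LUC1_loc_has_left_deriv:
  assumes "\<phi> \<in> LUC1_loc" "X \<in> one_param_subgroups"
  shows "has_left_deriv \<phi> X g (left_deriv X \<phi> g)"
proof -
  obtain d where "has_left_deriv \<phi> X g d" using assms unfolding LUC1_loc_def by blast
  then show ?thesis by (simp add: has_left_deriv_imp_left_deriv_eq)
qed

lemma has_left_deriv_rescale:
  fixes \<phi> :: "'g::{topological_group_add,t2_space} \<Rightarrow> 'y::locally_convex_space"
  assumes "X \<in> one_param_subgroups" "has_left_deriv \<phi> X g d"
  shows "has_left_deriv \<phi> (\<lambda>t. X (c * t)) g (c *\<^sub>R d)"
proof (cases "c = 0")
  case True
  then show ?thesis using one_param_subgroup_zero[OF assms(1)] by (simp add: has_left_deriv_def)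
next
  case False
  have "filterlim (\<lambda>t. c * t) (at 0) (at (0::real))"
    using False by (auto simp: filterlim_at eventually_at_filter intro!: tendsto_eq_intros)
  from filterlim_compose[OF assms(2)[unfolded has_left_deriv_def] this]
  have "((\<lambda>t. c *\<^sub>R ((1/(c*t)) *\<^sub>R (\<phi> (g + X (c*t)) - \<phi> g))) \<longlongrightarrow> c *\<^sub>R d) (at 0)"
    by (intro tendsto_scaleR_lcs tendsto_const)
  moreover have "\<forall>\<^sub>F t in at 0. c *\<^sub>R ((1/(c*t)) *\<^sub>R (\<phi> (g + X (c*t)) - \<phi> g))
      = (1/t) *\<^sub>R (\<phi> (g + X (c * t)) - \<phi> g)"
    using False by (auto simp: eventually_at_filter)
  ultimately show ?thesis unfolding has_left_deriv_def by (rule tendsto_cong[THEN iffD1, rotated])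
qed

section \<open>Left derivatives along a product limit\<close>

lemma one_param_increment_le:
  fixes \<phi> :: "'g::{topological_group_add,t2_space} \<Rightarrow> 'y::locally_convex_space"
  assumes p: "continuous_seminorm p" and X: "X \<in> one_param_subgroups"
    and D: "\<And>h. has_left_deriv \<phi> X h (D h)"
    and bound: "\<And>\<tau>. \<tau> \<in> closed_segment 0 s \<Longrightarrow> p (D (h + X \<tau>) - c) < e"
  shows "p (\<phi> (h + X s) - \<phi> h - s *\<^sub>R c) \<le> e * \<bar>s\<bar>"
proof -
  have "p ((\<lambda>\<tau>. \<phi> (h + X \<tau>)) s - (\<lambda>\<tau>. \<phi> (h + X \<tau>)) 0 - s *\<^sub>R c) \<le> e * \<bar>s\<bar>"
  proof (rule continuous_seminorm_increment_le[OF p])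
    fix \<tau>
    show "((\<lambda>r. (1/r) *\<^sub>R (\<phi> (h + X (\<tau> + r)) - \<phi> (h + X \<tau>))) \<longlongrightarrow> D (h + X \<tau>)) (at 0)"
      using D[of "h + X \<tau>"] by (simp add: has_left_deriv_def one_param_subgroup_add[OF X] add.assoc)
  qed (rule bound)
  then show ?thesis by (simp add: one_param_subgroup_zero[OF X])
qed

lemma continuous_seminorm_telescope_le:
  assumes p: "continuous_seminorm p" and step: "\<And>k. k < n \<Longrightarrow> p (F (Suc k) - F k - v) \<le> b"
  shows "p (F n - F 0 - real n *\<^sub>R v) \<le> real n * b"
  using step
proof (induction n)
  case 0
  then show ?case by (simp add: continuous_seminorm_zero[OF p])
next
  case (Suc n)
  have "F (Suc n) - F 0 - real (Suc n) *\<^sub>R v = (F n - F 0 - real n *\<^sub>R v) + (F (Suc n) - F n - v)"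
    by (simp add: algebra_simps)
  then have "p (F (Suc n) - F 0 - real (Suc n) *\<^sub>R v) \<le> p (F n - F 0 - real n *\<^sub>R v) + p (F (Suc n) - F n - v)"
    by (simp only: continuous_seminorm_triangle[OF p])
  also have "\<dots> \<le> real n * b + b" using Suc by (intro add_mono) auto
  finally show ?case by (simp add: algebra_simps)
qed

lemma product_increment_le:
  fixes \<phi> :: "'g::{topological_group_add,t2_space} \<Rightarrow> 'y::locally_convex_space"
  assumes p: "continuous_seminorm p"
    and X1: "X1 \<in> one_param_subgroups" and X2: "X2 \<in> one_param_subgroups"
    and D1: "\<And>h. has_left_deriv \<phi> X1 h (D1 h)" and D2: "\<And>h. has_left_deriv \<phi> X2 h (D2 h)"
    and T: "\<And>y. y \<in> T \<Longrightarrow> p (D1 y - c1) < e \<and> p (D2 y - c2) < e"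
    and in_T: "\<And>k \<tau>. k < n \<Longrightarrow> \<tau> \<in> closed_segment 0 s \<Longrightarrow>
      g + gpow (X1 s + X2 s) k + X1 \<tau> \<in> T \<and> g + gpow (X1 s + X2 s) k + X1 s + X2 \<tau> \<in> T"
  shows "p (\<phi> (g + gpow (X1 s + X2 s) n) - \<phi> g - (real n * s) *\<^sub>R (c1 + c2)) \<le> real n * (2 * e * \<bar>s\<bar>)"
proof -
  define F where "F k = \<phi> (g + gpow (X1 s + X2 s) k)" for k
  have "p (F (Suc k) - F k - s *\<^sub>R (c1 + c2)) \<le> 2 * e * \<bar>s\<bar>" if "k < n" for k
  proof -
    define h where "h = g + gpow (X1 s + X2 s) k"
    have step1: "p (\<phi> (h + X1 s) - \<phi> h - s *\<^sub>R c1) \<le> e * \<bar>s\<bar>"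
      using T in_T \<open>k < n\<close> by (intro one_param_increment_le[OF p X1 D1]) (auto simp: h_def)
    have step2: "p (\<phi> (h + X1 s + X2 s) - \<phi> (h + X1 s) - s *\<^sub>R c2) \<le> e * \<bar>s\<bar>"
      using T in_T \<open>k < n\<close> by (intro one_param_increment_le[OF p X2 D2]) (auto simp: h_def)
    have "F (Suc k) - F k - s *\<^sub>R (c1 + c2)
        = (\<phi> (h + X1 s) - \<phi> h - s *\<^sub>R c1) + (\<phi> (h + X1 s + X2 s) - \<phi> (h + X1 s) - s *\<^sub>R c2)"
      by (simp add: F_def h_def gpow_Suc_right add.assoc algebra_simps)
    then have "p (F (Suc k) - F k - s *\<^sub>R (c1 + c2))
        \<le> p (\<phi> (h + X1 s) - \<phi> h - s *\<^sub>R c1) + p (\<phi> (h + X1 s + X2 s) - \<phi> (h + X1 s) - s *\<^sub>R c2)"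
      by (simp only: continuous_seminorm_triangle[OF p])
    with step1 step2 show ?thesis by linarith
  qed
  then have "p (F n - F 0 - real n *\<^sub>R s *\<^sub>R (c1 + c2)) \<le> real n * (2 * e * \<bar>s\<bar>)"
    by (rule continuous_seminorm_telescope_le[OF p])
  then show ?thesis by (simp add: F_def)
qed

lemma one_param_subgroup_eventually_in:
  assumes "X \<in> one_param_subgroups" "open W" "0 \<in> W"
  shows "\<forall>\<^sub>F u in nhds 0. X u \<in> W"
proof -
  have "(X \<longlongrightarrow> X 0) (nhds 0)"
    using one_param_subgroup_isCont[OF assms(1), of 0] by (simp only: isCont_def tendsto_at_iff_tendsto_nhds)
  then show ?thesis using one_param_subgroup_zero[OF assms(1)] assms(2,3) by (auto dest: topological_tendstoD)
qed

lemma eventually_product_powers_in: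
  fixes X1 X2 X :: "real \<Rightarrow> 'g::{topological_group_add,t2_space}"
  assumes X1: "X1 \<in> one_param_subgroups" and X2: "X2 \<in> one_param_subgroups"
    and X: "X \<in> one_param_subgroups"
    and uc: "unif_conv_on_compacts (\<lambda>n t. gpow (X1 (t / real n) + X2 (t / real n)) n) X"
    and W: "open W" "0 \<in> W"
  shows "\<forall>\<^sub>F u in nhds 0. \<forall>k. gpow (X1 (u / real k) + X2 (u / real k)) k \<in> W"
proof -
  define Y where "Y k u = gpow (X1 (u / real k) + X2 (u / real k)) k" for k u
  obtain W' where W': "open W'" "0 \<in> W'" "\<And>a b. a \<in> W' \<Longrightarrow> b \<in> W' \<Longrightarrow> 0 + a + b \<in> W"
    using open_contains_translate_sum2[OF W] by blast
  \<comment> \<open>uniform convergence on [-1, 1] handles all large k at once, continuity the finitely many others\<close>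
  have "nhd_of W' 0" using W' by (auto simp: nhd_of_def)
  from uc[unfolded unif_conv_on_compacts_def, rule_format, OF compact_Icc[of "-1" 1] this]
  obtain K where K: "\<And>k u. k \<ge> K \<Longrightarrow> u \<in> {-1..1} \<Longrightarrow> - X u + Y k u \<in> W'"
    unfolding eventually_sequentially Y_def by blast
  have Y_tendsto: "(Y k \<longlongrightarrow> 0) (nhds 0)" for k
  proof -
    have "((\<lambda>u. u * inverse (real k)) \<longlongrightarrow> 0 * inverse (real k)) (nhds 0)"
      by (intro tendsto_mult filterlim_ident tendsto_const)
    then have "((\<lambda>u. X1 (u / real k) + X2 (u / real k)) \<longlongrightarrow> X1 0 + X2 0) (nhds 0)"
      by (intro tendsto_add isCont_tendsto_compose[OF one_param_subgroup_isCont[OF X1]]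
          isCont_tendsto_compose[OF one_param_subgroup_isCont[OF X2]]) (simp_all add: divide_inverse)
    from tendsto_gpow[OF this, of k] show ?thesis
      by (simp add: Y_def[abs_def] one_param_subgroup_zero[OF X1] one_param_subgroup_zero[OF X2])
  qed
  have small_k: "\<forall>\<^sub>F u in nhds 0. \<forall>k\<in>{..<K}. Y k u \<in> W"
    using Y_tendsto W by (intro eventually_ball_finite) (auto dest: topological_tendstoD)
  have small_X: "\<forall>\<^sub>F u in nhds 0. X u \<in> W'"
    using X W'(1,2) by (rule one_param_subgroup_eventually_in)
  have "\<forall>\<^sub>F u in nhds 0. u \<in> {-1<..<1::real}"
    by (rule eventually_nhds_in_open) auto
  with small_k small_X show ?thesis
  proof eventually_elim
    case (elim u)
    have "Y k u \<in> W" for k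
    proof (cases "k < K")
      case False
      then show ?thesis using W'(3)[of "X u" "- X u + Y k u"] K[of k u] elim by simp
    qed (use elim in auto)
    then show ?case by (simp add: Y_def)
  qed
qed

lemma partial_products_in:
  fixes X1 X2 :: "real \<Rightarrow> 'g::monoid_add"
  assumes "0 \<in> W"
    and small: "\<And>u. \<bar>u\<bar> \<le> \<bar>t\<bar> \<Longrightarrow>
      (\<forall>k. gpow (X1 (u / real k) + X2 (u / real k)) k \<in> W) \<and> X1 u \<in> W \<and> X2 u \<in> W"
    and "n \<ge> 1" "k \<le> n" "\<tau> \<in> closed_segment 0 (t / real n)"
  shows "gpow (X1 (t / real n) + X2 (t / real n)) k \<in> W \<and> X1 \<tau> \<in> W \<and> X2 \<tau> \<in> W"
proof -
  define s where "s = t / real n"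
  have "\<bar>real j * s\<bar> \<le> \<bar>t\<bar>" if "j \<le> n" for j
  proof -
    have "\<bar>real j * s\<bar> = \<bar>t\<bar> * (real j / real n)" by (simp add: s_def abs_mult)
    also have "\<dots> \<le> \<bar>t\<bar> * 1" using that \<open>n \<ge> 1\<close> by (intro mult_left_mono) auto
    finally show ?thesis by simp
  qed
  from this[of 1] this[of k] \<open>n \<ge> 1\<close> \<open>k \<le> n\<close> have "\<bar>s\<bar> \<le> \<bar>t\<bar>" "\<bar>real k * s\<bar> \<le> \<bar>t\<bar>" by simp_all
  moreover have "\<bar>\<tau>\<bar> \<le> \<bar>s\<bar>"
    using assms(5) unfolding s_def[symmetric] by (auto simp: closed_segment_eq_real_ivl split: if_splits)
  ultimately have "X1 \<tau> \<in> W" "X2 \<tau> \<in> W" "gpow (X1 (real k * s / real k) + X2 (real k * s / real k)) k \<in> W"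
    using small by (meson order_trans)+
  with \<open>0 \<in> W\<close> show ?thesis by (cases "k = 0") (simp_all add: s_def)
qed

lemma increment_le_of_small_products:
  fixes \<phi> :: "'g::{topological_group_add,t2_space} \<Rightarrow> 'y::locally_convex_space"
  assumes p: "continuous_seminorm p"
    and X1: "X1 \<in> one_param_subgroups" and X2: "X2 \<in> one_param_subgroups"
    and uc: "unif_conv_on_compacts (\<lambda>n t. gpow (X1 (t / real n) + X2 (t / real n)) n) X"
    and \<phi>_cont: "\<And>y. isCont \<phi> y"
    and D1: "\<And>h. has_left_deriv \<phi> X1 h (D1 h)" and D2: "\<And>h. has_left_deriv \<phi> X2 h (D2 h)"
    and T: "\<And>y. y \<in> T \<Longrightarrow> p (D1 y - c1) < e \<and> p (D2 y - c2) < e"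
    and W: "0 \<in> W" "\<And>a b c. a \<in> W \<Longrightarrow> b \<in> W \<Longrightarrow> c \<in> W \<Longrightarrow> g + a + b + c \<in> T"
    and small: "\<And>u. \<bar>u\<bar> \<le> \<bar>t\<bar> \<Longrightarrow>
      (\<forall>k. gpow (X1 (u / real k) + X2 (u / real k)) k \<in> W) \<and> X1 u \<in> W \<and> X2 u \<in> W"
  shows "p (\<phi> (g + X t) - \<phi> g - t *\<^sub>R (c1 + c2)) \<le> 2 * e * \<bar>t\<bar>"
proof -
  define Y where "Y n = gpow (X1 (t / real n) + X2 (t / real n)) n" for n
  have "p (\<phi> (g + Y n) - \<phi> g - t *\<^sub>R (c1 + c2)) \<le> 2 * e * \<bar>t\<bar>" if "n \<ge> 1" for n
  proof -
    define s where "s = t / real n"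
    have "p (\<phi> (g + gpow (X1 s + X2 s) n) - \<phi> g - (real n * s) *\<^sub>R (c1 + c2)) \<le> real n * (2 * e * \<bar>s\<bar>)"
    proof (rule product_increment_le[OF p X1 X2 D1 D2 T])
      fix k \<tau> assume "k < n" "\<tau> \<in> closed_segment 0 s"
      have in_W: "gpow (X1 s + X2 s) k \<in> W \<and> X1 \<sigma> \<in> W \<and> X2 \<sigma> \<in> W"
        if "\<sigma> \<in> closed_segment 0 s" for \<sigma>
        unfolding s_def using that \<open>k < n\<close>
        by (intro partial_products_in[OF W(1) _ \<open>n \<ge> 1\<close>]) (auto simp: s_def small)
      have "gpow (X1 s + X2 s) k \<in> W \<and> X1 \<tau> \<in> W \<and> X2 \<tau> \<in> W" "X1 s \<in> W"
        using in_W[OF \<open>\<tau> \<in> closed_segment 0 s\<close>] in_W[OF ends_in_segment(2)] by simp_all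
      then show "g + gpow (X1 s + X2 s) k + X1 \<tau> \<in> T \<and> g + gpow (X1 s + X2 s) k + X1 s + X2 \<tau> \<in> T"
        using W(2)[of _ _ 0] W(2) W(1) by simp
    qed
    moreover have "real n * s = t" "real n * (2 * e * \<bar>s\<bar>) = 2 * e * \<bar>t\<bar>"
      using \<open>n \<ge> 1\<close> by (simp_all add: s_def abs_divide)
    ultimately show ?thesis by (simp add: Y_def s_def)
  qed
  then have "\<forall>\<^sub>F n in sequentially. p (\<phi> (g + Y n) - \<phi> g - t *\<^sub>R (c1 + c2)) \<le> 2 * e * \<bar>t\<bar>"
    unfolding eventually_sequentially by blast
  moreover have "(Y \<longlongrightarrow> X t) sequentially"
    using unif_conv_on_compacts_imp_tendsto[OF uc, of t] by (simp add: Y_def[abs_def])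
  then have "((\<lambda>n. p (\<phi> (g + Y n) - \<phi> g - t *\<^sub>R (c1 + c2)))
      \<longlongrightarrow> p (\<phi> (g + X t) - \<phi> g - t *\<^sub>R (c1 + c2))) sequentially"
    by (intro tendsto_continuous_seminorm[OF p] tendsto_intros isCont_tendsto_compose[OF \<phi>_cont])
  ultimately show ?thesis by (intro tendsto_upperbound) auto
qed

lemma has_left_deriv_product_limit:
  fixes \<phi> :: "'g::{topological_group_add,t2_space} \<Rightarrow> 'y::locally_convex_space"
  assumes X1: "X1 \<in> one_param_subgroups" and X2: "X2 \<in> one_param_subgroups"
    and X: "X \<in> one_param_subgroups"
    and uc: "unif_conv_on_compacts (\<lambda>n t. gpow (X1 (t / real n) + X2 (t / real n)) n) X"
    and \<phi>_cont: "\<And>y. isCont \<phi> y"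
    and D1: "\<And>h. has_left_deriv \<phi> X1 h (D1 h)" and D2: "\<And>h. has_left_deriv \<phi> X2 h (D2 h)"
    and D_cont: "isCont D1 g" "isCont D2 g"
  shows "has_left_deriv \<phi> X g (D1 g + D2 g)"
  unfolding has_left_deriv_def
proof (rule tendsto_by_continuous_seminorms)
  fix p :: "'y \<Rightarrow> real" and e :: real assume p: "continuous_seminorm p" and "e > 0"
  have "\<forall>\<^sub>F y in nhds g. p (D1 y - D1 g) < e / 2 \<and> p (D2 y - D2 g) < e / 2"
    using \<open>e > 0\<close> by (intro eventually_conj eventually_continuous_seminorm_less[OF p] D_cont) simp_all
  then obtain T where T: "open T" "g \<in> T" "\<And>y. y \<in> T \<Longrightarrow> p (D1 y - D1 g) < e / 2 \<and> p (D2 y - D2 g) < e / 2"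
    unfolding eventually_nhds by blast
  obtain W where W: "open W" "0 \<in> W" "\<And>a b c. a \<in> W \<Longrightarrow> b \<in> W \<Longrightarrow> c \<in> W \<Longrightarrow> g + a + b + c \<in> T"
    using open_contains_translate_sum3[OF T(1,2)] by blast
  have "\<forall>\<^sub>F u in nhds 0. (\<forall>k. gpow (X1 (u / real k) + X2 (u / real k)) k \<in> W) \<and> X1 u \<in> W \<and> X2 u \<in> W"
    using eventually_product_powers_in[OF X1 X2 X uc W(1,2)]
      one_param_subgroup_eventually_in[OF X1 W(1,2)] one_param_subgroup_eventually_in[OF X2 W(1,2)]
    by (intro eventually_conj)
  then obtain \<delta> where "\<delta> > 0" and small: "\<And>u. \<bar>u\<bar> < \<delta> \<Longrightarrow>
      (\<forall>k. gpow (X1 (u / real k) + X2 (u / real k)) k \<in> W) \<and> X1 u \<in> W \<and> X2 u \<in> W"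
    unfolding eventually_nhds_metric dist_real_def by auto
  have "p ((1/t) *\<^sub>R (\<phi> (g + X t) - \<phi> g) - (D1 g + D2 g)) \<le> e" if "t \<noteq> 0" "\<bar>t\<bar> < \<delta>" for t
  proof -
    define A where "A = \<phi> (g + X t) - \<phi> g - t *\<^sub>R (D1 g + D2 g)"
    have "p A \<le> 2 * (e / 2) * \<bar>t\<bar>"
      unfolding A_def using that small
      by (intro increment_le_of_small_products[OF p X1 X2 uc \<phi>_cont D1 D2 T(3) W(2,3)]) auto
    moreover have "(1/t) *\<^sub>R (\<phi> (g + X t) - \<phi> g) - (D1 g + D2 g) = (1/t) *\<^sub>R A"
      using \<open>t \<noteq> 0\<close> by (simp add: A_def algebra_simps)
    ultimately show ?thesis
      using \<open>t \<noteq> 0\<close> by (simp add: continuous_seminorm_scaleR[OF p] divide_le_eq mult.commute)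
  qed
  then show "\<forall>\<^sub>F t in at 0. p ((1/t) *\<^sub>R (\<phi> (g + X t) - \<phi> g) - (D1 g + D2 g)) \<le> e"
    using \<open>\<delta> > 0\<close> unfolding eventually_at dist_real_def by auto
qed

theorem theorem2p4:
  fixes add :: "(real \<Rightarrow> 'g::{topological_group_add, t2_space}) \<Rightarrow> (real \<Rightarrow> 'g) \<Rightarrow> (real \<Rightarrow> 'g)"
    and scal :: "real \<Rightarrow> (real \<Rightarrow> 'g) \<Rightarrow> (real \<Rightarrow> 'g)"
    and z :: "real \<Rightarrow> 'g"
  assumes vs: "real_vector_space_on one_param_subgroups add scal z"
    and smult_char: "\<And>t s X. X \<in> one_param_subgroups \<Longrightarrow> scal t X s = X (t * s)"
    and add_char: "\<And>X1 X2. X1 \<in> one_param_subgroups \<Longrightarrow> X2 \<in> one_param_subgroups \<Longrightarrow>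
        unif_conv_on_compacts
          (\<lambda>n t. gpow (X1 (t / real n) + X2 (t / real n)) n) (add X1 X2)"
  shows "\<forall>\<phi>::'g \<Rightarrow> 'y::locally_convex_space. \<phi> \<in> LUC1_loc \<longrightarrow>
           (\<forall>X1\<in>one_param_subgroups. \<forall>X2\<in>one_param_subgroups.
              left_deriv (add X1 X2) \<phi> = (\<lambda>g. left_deriv X1 \<phi> g + left_deriv X2 \<phi> g)) \<and>
           (\<forall>c. \<forall>X\<in>one_param_subgroups.
              left_deriv (scal c X) \<phi> = (\<lambda>g. c *\<^sub>R left_deriv X \<phi> g))"
proof (intro allI impI conjI ballI ext)
  fix \<phi> :: "'g \<Rightarrow> 'y" and X1 X2 :: "real \<Rightarrow> 'g" and g
  assume \<phi>: "\<phi> \<in> LUC1_loc" and X1: "X1 \<in> one_param_subgroups" and X2: "X2 \<in> one_param_subgroups"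
  have \<phi>_cont: "isCont \<phi> y" and D_cont: "X \<in> one_param_subgroups \<Longrightarrow> isCont (left_deriv X \<phi>) y"
    for X :: "real \<Rightarrow> 'g" and y
    using \<phi> LUC_loc_isCont unfolding LUC1_loc_def by blast+
  have "add X1 X2 \<in> one_param_subgroups"
    using vs X1 X2 by (simp add: real_vector_space_on_def)
  from has_left_deriv_product_limit[OF X1 X2 this add_char[OF X1 X2] \<phi>_cont
      LUC1_loc_has_left_deriv[OF \<phi> X1] LUC1_loc_has_left_deriv[OF \<phi> X2] D_cont[OF X1] D_cont[OF X2]]
  show "left_deriv (add X1 X2) \<phi> g = left_deriv X1 \<phi> g + left_deriv X2 \<phi> g"
    by (rule has_left_deriv_imp_left_deriv_eq)
next
  fix \<phi> :: "'g \<Rightarrow> 'y" and c and X :: "real \<Rightarrow> 'g" and g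
  assume \<phi>: "\<phi> \<in> LUC1_loc" and X: "X \<in> one_param_subgroups"
  have "scal c X = (\<lambda>t. X (c * t))" using smult_char[OF X] by blast
  with has_left_deriv_rescale[OF X LUC1_loc_has_left_deriv[OF \<phi> X]]
  show "left_deriv (scal c X) \<phi> g = c *\<^sub>R left_deriv X \<phi> g"
    by (simp add: has_left_deriv_imp_left_deriv_eq)
qed

end
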